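(* For all integers $s,t\ge 1$ there exists an $H(2^{t+1},\,s2^t,\,2^{t+1}-1,\,2^{t+1}-2)$ design.
   Context: For an integer $q\ge1$, $Q_q=\{0,1,\dots,q-1\}$ and $Q_{q*}=Q_q\cup\{*\}$. The weight of a word $u\in Q_{q*}^n$ is $n$ minus the number of $*$ symbols in $u$. For $u,v\in Q_{q*}^n$ we say $u$ extends $v$ if $u_i=v_i$ for every position $i$ with $v_i\neq *$. For integers $n\ge w\ge t\ge1$, $q\ge1$, an $H(n,q,w,t)$ design is a set $S$ of words of weight $w$ in $Q_{q*}^n$ such that every word of weight $t$ in $Q_{q*}^n$ is extended by exactly one element of $S$. *)

theory Defs
  imports Main
begin

text \<open>A word in Q_{q*}^n is a list of length n over nat option, where None is the
  symbol * and Some a (with a < q) is the letter a of Q_q = {0..q-1}.\<close>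

definition words :: "nat \<Rightarrow> nat \<Rightarrow> nat option list set" where
  "words n q = {u. length u = n \<and> (\<forall>a. Some a \<in> set u \<longrightarrow> a < q)}"

definition weight :: "nat option list \<Rightarrow> nat" where
  "weight u = length u - length (filter (\<lambda>x. x = None) u)"

definition extends :: "nat option list \<Rightarrow> nat option list \<Rightarrow> bool" where
  "extends u v \<longleftrightarrow> length u = length v \<and>
     (\<forall>i < length v. v ! i \<noteq> None \<longrightarrow> u ! i = v ! i)"

definition H_design :: "nat \<Rightarrow> nat \<Rightarrow> nat \<Rightarrow> nat \<Rightarrow> nat option list set \<Rightarrow> bool" where
  "H_design n q w t S \<longleftrightarrow>
     S \<subseteq> {u \<in> words n q. weight u = w} \<and>
     (\<forall>v \<in> words n q. weight v = t \<longrightarrow> (\<exists>!u. u \<in> S \<and> extends u v))"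

end

theory Submission
  imports
    Defs
    "Berlekamp_Zassenhaus.Distinct_Degree_Factorization"
    "HOL-Computational_Algebra.Squarefree"
    "HOL-Number_Theory.Cong"
begin

text \<open>Index the n = 2^m positions by the elements of GF(2^m), represented as the
  binary polynomials of degree below m modulo an irreducible f.  Fix an index-two subgroup
  V of the additive group, and for positions i \<noteq> j put H(i,j) = (x_i + x_j) V.  A letter
  a < s 2^(m-1) is split into a digit a mod 2^(m-1), identified with an element of V, and
  a carry a div 2^(m-1).  The blocks are the words with a single star at p whose digits,
  scaled by x_p + x_k, sum to x_p and whose carries sum to 0 modulo s.  Filling one of
  the two stars of a word of weight n - 2 forces a value in a coset of H(i,j); since the
  two targets differ by x_i + x_j \<notin> H(i,j) modulo H(i,j), exactly one of the two
  fillings is possible, and then its digit and carry are uniquely determined.\<close>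

section \<open>Irreducible polynomials over prime fields\<close>

lemma sum_powers_less_power:
  fixes p :: nat
  assumes "2 \<le> p"
  shows "(\<Sum>d<m. p ^ d) < p ^ m"
proof (induction m)
  case (Suc m)
  have "(\<Sum>d<Suc m. p ^ d) < 2 * p ^ m" using Suc by simp
  also have "\<dots> \<le> p ^ Suc m" using assms by simp
  finally show ?case .
qed simp

lemma squarefree_dvdI:
  fixes a b :: "'a::factorial_semiring"
  assumes a: "squarefree a" and b: "b \<noteq> 0"
    and prime_dvd: "\<And>p. prime p \<Longrightarrow> p dvd a \<Longrightarrow> p dvd b"
  shows "a dvd b"
proof (rule multiplicity_le_imp_dvd)
  show a0: "a \<noteq> 0" using a by auto
  fix p :: 'a assume p: "prime p"
  show "multiplicity p a \<le> multiplicity p b"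
  proof (cases "p dvd a")
    case True
    have "multiplicity p a \<le> 1" using a a0 p squarefree_factorial_semiring'' by blast
    moreover have "0 < multiplicity p b"
      using prime_dvd[OF p True] p b by (simp add: prime_multiplicity_gt_zero_iff)
    ultimately show ?thesis by linarith
  qed (simp add: not_dvd_imp_multiplicity_0)
qed

lemma squarefree_if_is_unit_pderiv:
  fixes g :: "'a::idom_divide poly"
  assumes "is_unit (pderiv g)"
  shows "squarefree g"
proof (rule squarefreeI)
  fix x assume "x\<^sup>2 dvd g"
  then obtain h where "g = x * (x * h)" unfolding power2_eq_square by (metis dvdE mult.assoc)
  then have "pderiv g = x * (pderiv (x * h) + pderiv x * h)"
    by (simp add: pderiv_mult algebra_simps)
  then have "x dvd pderiv g" by simp
  then show "x dvd 1" using assms by (rule dvd_unit_imp_unit)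
qed

context
  fixes X :: "'a::prime_card mod_ring poly"
  defines "X \<equiv> monom 1 1"
begin

lemma degree_X_pow_card_minus_X:
  assumes "1 \<le> d"
  shows "degree (X ^ (CARD('a) ^ d) - X) = CARD('a) ^ d"
proof -
  have "1 < CARD('a) ^ d"
    using assms prime_gt_1_nat[OF prime_card[where 'a='a]] by (intro one_less_power) auto
  then show ?thesis
    unfolding X_def monom_power by (subst degree_minus_eq_right) (simp_all add: degree_monom_eq)
qed

lemma squarefree_X_pow_card_minus_X:
  assumes "1 \<le> d"
  shows "squarefree (X ^ (CARD('a) ^ d) - X)"
proof (rule squarefree_if_is_unit_pderiv)
  have "(of_nat (CARD('a) ^ d) :: 'a mod_ring) = 0" using assms by simp
  then have "pderiv (X ^ (CARD('a) ^ d) - X) = -1"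
    unfolding X_def monom_power by (simp add: pderiv_diff pderiv_monom)
  then show "is_unit (pderiv (X ^ (CARD('a) ^ d) - X))" by simp
qed

text \<open>If no irreducible polynomial of degree m existed, the squarefree polynomial
  X^(q^m) - X, whose irreducible factors all have degree at most m, would divide the
  product of the X^(q^d) - X for d < m, which has smaller degree.\<close>

lemma exists_irreducible_of_degree:
  assumes m: "1 \<le> m"
  shows "\<exists>f :: 'a mod_ring poly. irreducible f \<and> degree f = m"
proof (rule ccontr)
  assume no_irr: "\<not> ?thesis"
  define g where "g d = X ^ (CARD('a) ^ d) - X" for d
  define P where "P = (\<Prod>d\<in>{1..<m}. g d)"
  have deg_g: "degree (g d) = CARD('a) ^ d" if "1 \<le> d" for d
    unfolding g_def using that by (rule degree_X_pow_card_minus_X)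
  have "g d \<noteq> 0" if "1 \<le> d" for d
    using deg_g[OF that] that prime_card[where 'a='a] by (auto dest!: prime_gt_1_nat)
  then have P0: "P \<noteq> 0" unfolding P_def by auto
  have "g m dvd P"
  proof (rule squarefree_dvdI[OF _ P0])
    show "squarefree (g m)" unfolding g_def using m by (rule squarefree_X_pow_card_minus_X)
    fix p assume p: "prime p" and "p dvd g m"
    have irr: "irreducible p" by (rule prime_elem_imp_irreducible[OF prime_imp_prime_elem[OF p]])
    have "degree p \<noteq> 0"
      using p by (metis is_unit_iff_degree not_prime_0 not_prime_unit)
    moreover have "degree p < m"
      using no_irr irr degree_divisor2[OF irr refl m] \<open>p dvd g m\<close>
      unfolding g_def X_def by (metis linorder_neqE_nat)
    ultimately have "g (degree p) dvd P" unfolding P_def by (intro dvd_prodI) auto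
    moreover have "p dvd g (degree p)" unfolding g_def X_def by (rule degree_divisor1[OF irr refl])
    ultimately show "p dvd P" by (rule dvd_trans[rotated])
  qed
  then have "degree (g m) \<le> degree P" using P0 by (rule dvd_imp_degree_le)
  also have "\<dots> \<le> (\<Sum>d\<in>{1..<m}. degree (g d))"
    unfolding P_def using degree_prod_sum_le[of "{1..<m}" g] by simp
  also have "\<dots> = (\<Sum>d\<in>{1..<m}. CARD('a) ^ d)" by (simp add: deg_g)
  also have "\<dots> \<le> (\<Sum>d<m. CARD('a) ^ d)" by (rule sum_mono2) auto
  also have "\<dots> < CARD('a) ^ m"
    by (rule sum_powers_less_power) (use prime_card[where 'a='a] prime_ge_2_nat in blast)
  finally show False using deg_g[OF m] by simp
qed

end

lemma card_polys_of_degree_less: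
  assumes "1 \<le> k"
  shows "finite {x :: 'a::prime_card mod_ring poly. degree x < k}"
    and "card {x :: 'a::prime_card mod_ring poly. degree x < k} = CARD('a) ^ k"
proof -
  obtain f :: "'a mod_ring poly" where f: "irreducible f" "degree f = k"
    using exists_irreducible_of_degree[OF assms] by blast
  have "irreducible\<^sub>d f" using f(1) by simp
  then interpret poly_mod_type_irr "CARD('a)" f by unfold_locales auto
  show "finite {x :: 'a mod_ring poly. degree x < k}"
    and "card {x :: 'a mod_ring poly. degree x < k} = CARD('a) ^ k"
    using finite_carrier_irr card_carrier_irr unfolding carrier_irr_def f(2) by simp_all
qed

section \<open>Words with stars\<close>

definition stars :: "nat option list \<Rightarrow> nat set" where
  "stars u = {i. i < length u \<and> u ! i = None}"

lemma mem_stars: "i \<in> stars u \<longleftrightarrow> i < length u \<and> u ! i = None"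
  unfolding stars_def by simp

lemma weight_eq_card_stars: "weight u = length u - card (stars u)"
  unfolding weight_def stars_def by (simp add: length_filter_conv_card)

lemma stars_subset: "stars u \<subseteq> {..<length u}"
  unfolding stars_def by auto

lemma card_stars_weight:
  assumes "u \<in> words n q" and "weight u = n - k" and "k \<le> n"
  shows "card (stars u) = k"
proof -
  have "card (stars u) \<le> n"
    using card_mono[OF _ stars_subset, of u] assms(1) by (simp add: words_def)
  then show ?thesis using assms by (simp add: words_def weight_eq_card_stars)
qed

lemma stars_mono_extends: "extends u v \<Longrightarrow> stars u \<subseteq> stars v"
  unfolding extends_def stars_def by force

lemma stars_update_Some: "stars (v[r := Some a]) = stars v - {r}"
  unfolding stars_def by (cases "r < length v") (auto simp: nth_list_update)

lemma extends_update: "v ! r = None \<Longrightarrow> extends (v[r := x]) v"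
  unfolding extends_def by (metis length_list_update nth_list_update_neq)

lemma update_mem_words: "v \<in> words n q \<Longrightarrow> a < q \<Longrightarrow> v[r := Some a] \<in> words n q"
  unfolding words_def by (auto dest: set_update_subset_insert[THEN subsetD])

lemma extends_one_star_iff:
  assumes v: "v \<in> words n q" and stars_v: "stars v = {p, r}" and "p \<noteq> r"
  shows "u \<in> words n q \<and> extends u v \<and> stars u = {p} \<longleftrightarrow> (\<exists>a<q. u = v[r := Some a])"
proof
  have len_v: "length v = n" using v by (simp add: words_def)
  have r: "r < n" "v ! r = None" using stars_v len_v mem_stars[of r v] by simp_all
  assume u: "u \<in> words n q \<and> extends u v \<and> stars u = {p}"
  have len_u: "length u = n" using u by (simp add: words_def)
  have "r \<notin> stars u" using u \<open>p \<noteq> r\<close> by simp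
  then obtain a where ur: "u ! r = Some a" using r len_u by (auto simp: mem_stars)
  have "Some a \<in> set u" using ur r len_u by (metis nth_mem)
  then have "a < q" using u unfolding words_def by blast
  moreover have "u = v[r := Some a]"
  proof (rule nth_equalityI)
    fix k assume k: "k < length u"
    show "u ! k = v[r := Some a] ! k"
    proof (cases "k = r")
      case True
      then show ?thesis using ur r len_v by simp
    next
      case False
      show ?thesis
      proof (cases "k = p")
        case True
        then have "u ! k = None" "v ! k = None"
          using u stars_v mem_stars[of p u] mem_stars[of p v] by simp_all
        then show ?thesis using \<open>k \<noteq> r\<close> by simp
      next
        case False
        then have "v ! k \<noteq> None" using \<open>k \<noteq> r\<close> k len_u len_v stars_v mem_stars[of k v] by auto
        then show ?thesis using u k \<open>k \<noteq> r\<close> len_u len_v unfolding extends_def by simp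
      qed
    qed
  qed (simp add: len_u len_v)
  ultimately show "\<exists>a<q. u = v[r := Some a]" by blast
next
  assume "\<exists>a<q. u = v[r := Some a]"
  then obtain a where a: "a < q" and u: "u = v[r := Some a]" by blast
  have "v ! r = None" using stars_v mem_stars[of r v] by simp
  then have "extends u v" unfolding u by (rule extends_update)
  moreover have "stars u = {p}" using stars_v \<open>p \<noteq> r\<close> unfolding u stars_update_Some by auto
  ultimately show "u \<in> words n q \<and> extends u v \<and> stars u = {p}"
    using update_mem_words[OF v a] u by simp
qed

lemma sum_update_split:
  assumes "r \<in> A" and "finite A" and "r < length v"
  shows "(\<Sum>k\<in>A. g k (v[r := x] ! k)) = g r x + (\<Sum>k\<in>A - {r}. g k (v ! k))"
proof -
  have "(\<Sum>k\<in>A - {r}. g k (v[r := x] ! k)) = (\<Sum>k\<in>A - {r}. g k (v ! k))"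
    by (rule sum.cong) auto
  with assms show ?thesis by (simp add: sum.remove)
qed

lemma sum_mem_if_diff_closed:
  fixes f :: "'b \<Rightarrow> 'a::ab_group_add"
  assumes "finite K" and "0 \<in> A" and "\<And>x y. x \<in> A \<Longrightarrow> y \<in> A \<Longrightarrow> x - y \<in> A"
    and "\<And>k. k \<in> K \<Longrightarrow> f k \<in> A"
  shows "sum f K \<in> A"
  using assms(1,4)
proof (induction K rule: finite_induct)
  case (insert k K)
  then have "f k - (0 - sum f K) \<in> A" using assms(2,3) by blast
  then show ?case using insert.hyps by simp
qed (simp add: assms(2))

lemma ex1_digits:
  fixes q0 s Y :: nat
  assumes F: "bij_betw F {..<q0} B" and "T \<in> B" and s: "0 < s"
  shows "\<exists>!a. a < s * q0 \<and> F (a mod q0) = T \<and> (Y + a div q0) mod s = 0"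
proof -
  obtain lo where lo: "lo < q0" "F lo = T" using F \<open>T \<in> B\<close> unfolding bij_betw_def by auto
  define hi where "hi = (s - Y mod s) mod s"
  have "Y + (s - Y mod s) = s * Suc (Y div s)"
    using mult_div_mod_eq[of s Y] mod_less_divisor[OF s, of Y] by (simp only: mult_Suc_right)
  then have hi: "hi < s" "(Y + hi) mod s = 0"
    using s unfolding hi_def by (simp_all add: mod_add_right_eq)
  have unique_hi: "x = hi" if "x < s" "(Y + x) mod s = 0" for x
  proof -
    have "[Y + x = Y + hi] (mod s)" using that hi unfolding cong_def by simp
    then have "[x = hi] (mod s)" by (simp add: cong_add_lcancel_nat)
    then show ?thesis using that hi by (simp add: cong_def)
  qed
  have unique_lo: "x = lo" if "x < q0" "F x = T" for x
    using F that lo unfolding bij_betw_def by (auto dest: inj_onD)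
  show ?thesis
  proof (rule ex1I)
    have "lo + q0 * hi < Suc hi * q0" using lo by simp
    also have "\<dots> \<le> s * q0" using hi by (intro mult_le_mono1) simp
    finally show "lo + q0 * hi < s * q0 \<and> F ((lo + q0 * hi) mod q0) = T \<and>
        (Y + (lo + q0 * hi) div q0) mod s = 0"
      using lo hi by simp
    fix a assume a: "a < s * q0 \<and> F (a mod q0) = T \<and> (Y + a div q0) mod s = 0"
    have "q0 \<noteq> 0" using lo by simp
    then have "a mod q0 = lo" using a unique_lo by simp
    moreover have "a div q0 = hi" using a unique_hi by (simp add: less_mult_imp_div_less)
    ultimately have "q0 * hi + lo = a" using mult_div_mod_eq[of q0 a] by (simp only:)
    then show "a = lo + q0 * hi" by simp
  qed
qed

section \<open>Designs from an index-two system\<close>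

text \<open>In the construction over GF(2^m), c i is the field element x_i of position i, H i j
  is the index-two subgroup (x_i + x_j) V, and N i j maps a digit to (x_i + x_j) times
  the corresponding element of V.\<close>

locale index_two_system =
  fixes n q0 s :: nat
    and U :: "'w::ab_group_add set"
    and H :: "nat \<Rightarrow> nat \<Rightarrow> 'w set"
    and N :: "nat \<Rightarrow> nat \<Rightarrow> nat \<Rightarrow> 'w"
    and c :: "nat \<Rightarrow> 'w"
  assumes two_le_n: "2 \<le> n" and s_pos: "0 < s"
    and U_zero: "0 \<in> U" and U_diff: "\<And>x y. x \<in> U \<Longrightarrow> y \<in> U \<Longrightarrow> x - y \<in> U"
    and H_zero: "\<And>i j. 0 \<in> H i j"
    and H_diff: "\<And>i j x y. x \<in> H i j \<Longrightarrow> y \<in> H i j \<Longrightarrow> x - y \<in> H i j"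
    and H_sym: "\<And>i j. H i j = H j i"
    and H_subset: "\<And>i j. H i j \<subseteq> U"
    and H_index_two: "\<And>i j x y. i < n \<Longrightarrow> j < n \<Longrightarrow> i \<noteq> j \<Longrightarrow>
      x \<in> U - H i j \<Longrightarrow> y \<in> U - H i j \<Longrightarrow> x - y \<in> H i j"
    and N_bij: "\<And>i j. i < n \<Longrightarrow> j < n \<Longrightarrow> i \<noteq> j \<Longrightarrow> bij_betw (N i j) {..<q0} (H i j)"
    and N_diff: "\<And>i j k a. i < n \<Longrightarrow> j < n \<Longrightarrow> k < n \<Longrightarrow> k \<noteq> i \<Longrightarrow> k \<noteq> j \<Longrightarrow> a < q0 \<Longrightarrow>
      N i k a - N j k a \<in> H i j"
    and c_mem: "\<And>i. i < n \<Longrightarrow> c i \<in> U"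
    and c_diff: "\<And>i j. i < n \<Longrightarrow> j < n \<Longrightarrow> i \<noteq> j \<Longrightarrow> c i - c j \<notin> H i j"
begin

lemma q0_pos: "0 < q0"
proof -
  have "0 \<in> N 0 1 ` {..<q0}" using N_bij[of 0 1] two_le_n H_zero by (simp add: bij_betw_def)
  then show ?thesis by (auto intro: gr0I)
qed

lemma N_mem: "i < n \<Longrightarrow> j < n \<Longrightarrow> i \<noteq> j \<Longrightarrow> N i j (a mod q0) \<in> H i j"
  using N_bij[of i j] q0_pos by (auto simp: bij_betw_def)

definition syndrome :: "nat \<Rightarrow> nat option list \<Rightarrow> 'w" where
  "syndrome p u = (\<Sum>k\<in>{..<n} - {p}. N p k (the (u ! k) mod q0))"

definition carry :: "nat \<Rightarrow> nat option list \<Rightarrow> nat" where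
  "carry p u = (\<Sum>k\<in>{..<n} - {p}. the (u ! k) div q0)"

definition blocks :: "nat option list set" where
  "blocks = {u \<in> words n (s * q0). \<exists>p. stars u = {p} \<and> syndrome p u = c p \<and> carry p u mod s = 0}"

definition target :: "nat \<Rightarrow> nat \<Rightarrow> nat option list \<Rightarrow> 'w" where
  "target p r v = c p - (\<Sum>k\<in>{..<n} - {p, r}. N p k (the (v ! k) mod q0))"

definition carry_rest :: "nat \<Rightarrow> nat \<Rightarrow> nat option list \<Rightarrow> nat" where
  "carry_rest p r v = (\<Sum>k\<in>{..<n} - {p, r}. the (v ! k) div q0)"

definition completions :: "nat \<Rightarrow> nat \<Rightarrow> nat option list \<Rightarrow> nat set" where
  "completions p r v = {a. a < s * q0 \<and> N p r (a mod q0) = target p r v \<and>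
     (carry_rest p r v + a div q0) mod s = 0}"

lemma syndrome_update:
  assumes "length v = n" and "r < n" and "r \<noteq> p"
  shows "syndrome p (v[r := Some a]) = N p r (a mod q0) - target p r v + c p"
proof -
  have "{..<n} - {p} - {r} = {..<n} - {p, r}" by auto
  then show ?thesis unfolding syndrome_def target_def
    using assms sum_update_split[of r "{..<n} - {p}" v "\<lambda>k x. N p k (the x mod q0)"] by simp
qed

lemma carry_update:
  assumes "length v = n" and "r < n" and "r \<noteq> p"
  shows "carry p (v[r := Some a]) = carry_rest p r v + a div q0"
proof -
  have "{..<n} - {p} - {r} = {..<n} - {p, r}" by auto
  then show ?thesis unfolding carry_def carry_rest_def
    using assms sum_update_split[of r "{..<n} - {p}" v "\<lambda>k x. the x div q0"] by simp
qed

lemma mem_blocks_star_at: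
  "stars u = {p} \<Longrightarrow> u \<in> blocks \<longleftrightarrow> u \<in> words n (s * q0) \<and> syndrome p u = c p \<and> carry p u mod s = 0"
  unfolding blocks_def by auto

lemma block_with_star_iff:
  assumes v: "v \<in> words n (s * q0)" and stars_v: "stars v = {p, r}" and "p \<noteq> r"
  shows "u \<in> blocks \<and> extends u v \<and> stars u = {p} \<longleftrightarrow> (\<exists>a \<in> completions p r v. u = v[r := Some a])"
proof -
  have len_v: "length v = n" and r: "r < n"
    using v stars_v stars_subset[of v] by (auto simp: words_def)
  have "u \<in> blocks \<and> extends u v \<and> stars u = {p} \<longleftrightarrow>
      (u \<in> words n (s * q0) \<and> extends u v \<and> stars u = {p}) \<and>
      syndrome p u = c p \<and> carry p u mod s = 0"
    by (cases "stars u = {p}") (auto simp: mem_blocks_star_at)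
  also have "\<dots> \<longleftrightarrow> (\<exists>a < s * q0. u = v[r := Some a]) \<and> syndrome p u = c p \<and> carry p u mod s = 0"
    by (simp only: extends_one_star_iff[OF v stars_v \<open>p \<noteq> r\<close>])
  also have "\<dots> \<longleftrightarrow> (\<exists>a \<in> completions p r v. u = v[r := Some a])"
  proof -
    have "syndrome p (v[r := Some a]) = c p \<longleftrightarrow> N p r (a mod q0) = target p r v" for a
      using syndrome_update[OF len_v r] \<open>p \<noteq> r\<close> by simp
    then show ?thesis
      using carry_update[OF len_v r \<open>p \<noteq> r\<close>[symmetric]] unfolding completions_def by auto
  qed
  finally show ?thesis .
qed

lemma ex1_completion:
  assumes "p < n" and "r < n" and "p \<noteq> r" and "target p r v \<in> H p r"
  shows "\<exists>!a. a \<in> completions p r v"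
  unfolding completions_def mem_Collect_eq
  by (rule ex1_digits[OF N_bij[OF assms(1-3)] assms(4) s_pos])

lemma completions_empty:
  assumes "p < n" and "r < n" and "p \<noteq> r" and "target p r v \<notin> H p r"
  shows "completions p r v = {}"
proof -
  have "N p r (a mod q0) \<noteq> target p r v" for a using N_mem[OF assms(1-3), of a] assms(4) by auto
  then show ?thesis unfolding completions_def by simp
qed

lemma H_add: "x \<in> H i j \<Longrightarrow> y \<in> H i j \<Longrightarrow> x + y \<in> H i j"
  using H_diff[of x i j "0 - y"] H_diff[of 0 i j y] H_zero by simp

lemma target_mem:
  assumes "p < n"
  shows "target p r v \<in> U"
  unfolding target_def
proof (rule U_diff)
  show "c p \<in> U" using assms by (rule c_mem)
  show "(\<Sum>k\<in>{..<n} - {p, r}. N p k (the (v ! k) mod q0)) \<in> U"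
    by (rule sum_mem_if_diff_closed[OF _ U_zero U_diff]) (use assms N_mem H_subset in blast)+
qed

text \<open>The targets of the two possible completions of a word with two stars differ by
  c i - c j modulo H i j, so by the index-two property exactly one of them lies in H i j.\<close>

lemma target_in_H_iff:
  assumes ij: "i < n" "j < n" "i \<noteq> j"
  shows "target i j v \<in> H i j \<longleftrightarrow> target j i v \<notin> H i j"
proof -
  define D where "D = (\<Sum>k\<in>{..<n} - {i, j}. N i k (the (v ! k) mod q0) - N j k (the (v ! k) mod q0))"
  have "D \<in> H i j" unfolding D_def
    by (rule sum_mem_if_diff_closed[OF _ H_zero H_diff])
      (auto intro: N_diff[OF ij(1,2)] simp: q0_pos)
  moreover have "c i - c j = (target i j v - target j i v) + D"
    unfolding D_def target_def by (simp add: insert_commute sum_subtractf)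
  ultimately have "target i j v - target j i v \<notin> H i j"
    using c_diff[OF ij] H_add[of "target i j v - target j i v" i j D] by auto
  then show ?thesis
    using H_diff[of "target i j v" i j "target j i v"] target_mem[OF ij(1)] target_mem[OF ij(2)]
      H_index_two[OF ij, of "target i j v" "target j i v"] by blast
qed

lemma ex1_block_extending:
  assumes v: "v \<in> words n (s * q0)" and stars_v: "stars v = {p, r}" and "p \<noteq> r"
    and target: "target p r v \<in> H p r"
  shows "\<exists>!u. u \<in> blocks \<and> extends u v"
proof -
  have pr: "p < n" "r < n" using v stars_v stars_subset[of v] by (auto simp: words_def)
  have "completions r p v = {}"
    using completions_empty[OF pr(2,1) \<open>p \<noteq> r\<close>[symmetric]] target_in_H_iff[OF pr \<open>p \<noteq> r\<close>] target
    by (simp add: H_sym)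
  then have no_star_at_r: "\<not> (u \<in> blocks \<and> extends u v \<and> stars u = {r})" for u
    using block_with_star_iff[OF v _ \<open>p \<noteq> r\<close>[symmetric], of u] stars_v by (simp add: insert_commute)
  have extending_iff:
    "u \<in> blocks \<and> extends u v \<longleftrightarrow> (\<exists>a \<in> completions p r v. u = v[r := Some a])" for u
  proof
    assume u: "u \<in> blocks \<and> extends u v"
    then obtain p' where "stars u = {p'}" by (auto simp: blocks_def)
    moreover have "stars u \<subseteq> {p, r}" using u stars_mono_extends stars_v by blast
    ultimately have "stars u = {p}" using no_star_at_r[of u] u by auto
    then show "\<exists>a \<in> completions p r v. u = v[r := Some a]"
      using u block_with_star_iff[OF v stars_v \<open>p \<noteq> r\<close>] by blast
  qed (use block_with_star_iff[OF v stars_v \<open>p \<noteq> r\<close>] in blast)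
  obtain a where a: "a \<in> completions p r v" and unique: "\<forall>b. b \<in> completions p r v \<longrightarrow> b = a"
    using ex1_completion[OF pr \<open>p \<noteq> r\<close> target] by (rule ex1E)
  show ?thesis
  proof (rule ex1I)
    show "v[r := Some a] \<in> blocks \<and> extends (v[r := Some a]) v" using extending_iff a by blast
    fix u assume "u \<in> blocks \<and> extends u v"
    then obtain b where "b \<in> completions p r v" "u = v[r := Some b]" using extending_iff by blast
    then show "u = v[r := Some a]" using unique by simp
  qed
qed

theorem H_design_blocks: "H_design n (s * q0) (n - 1) (n - 2) blocks"
  unfolding H_design_def
proof (intro conjI ballI impI)
  show "blocks \<subseteq> {u \<in> words n (s * q0). weight u = n - 1}"
    by (auto simp: blocks_def words_def weight_eq_card_stars)
next
  fix v assume v: "v \<in> words n (s * q0)" and "weight v = n - 2"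
  then have "card (stars v) = 2" using two_le_n by (intro card_stars_weight) auto
  then obtain i j where ij: "stars v = {i, j}" "i \<noteq> j" by (auto simp: card_2_iff)
  then have "i < n" "j < n" using v stars_subset[of v] by (auto simp: words_def)
  then consider "target i j v \<in> H i j" | "target j i v \<in> H j i"
    using target_in_H_iff ij(2) H_sym by blast
  then show "\<exists>!u. u \<in> blocks \<and> extends u v"
  proof cases
    case 1
    then show ?thesis using ex1_block_extending[OF v ij] by blast
  next
    case 2
    have "stars v = {j, i}" using ij(1) by auto
    then show ?thesis using ex1_block_extending[OF v _ ij(2)[symmetric] 2] by blast
  qed
qed

end

section \<open>The index-two system over GF(2^m)\<close>

lemma uminus_GF2 [simp]: "- (c :: bool mod_ring) = c"
proof -
  have "(1 :: bool mod_ring) + 1 = 0" using of_nat_card_eq_0[where 'a=bool] by simp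
  then have "c + c = 0" by (metis distrib_left mult.right_neutral mult_zero_right)
  then show ?thesis by (simp add: minus_unique)
qed

lemma add_self_GF2 [simp]: "(c :: bool mod_ring) + c = 0"
  by (metis uminus_GF2 add.right_inverse)

lemma uminus_GF2_poly [simp]: "- (x :: bool mod_ring poly) = x"
  by (rule poly_eqI) simp

lemma add_self_GF2_poly [simp]: "(x :: bool mod_ring poly) + x = 0"
  by (metis uminus_GF2_poly add.right_inverse)

lemma diff_GF2_poly: "(x :: bool mod_ring poly) - y = x + y"
  by (metis diff_conv_add_uminus uminus_GF2_poly)

lemma GF2_cases: "(c :: bool mod_ring) = 0 \<or> c = 1"
proof -
  have "{0, 1 :: bool mod_ring} = UNIV" by (rule card_subset_eq) simp_all
  then show ?thesis by auto
qed

locale GF2_extension =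
  fixes f :: "bool mod_ring poly"
  assumes irreducible_f: "irreducible f" and two_le_degree: "2 \<le> degree f"
begin

definition residue_polys :: "bool mod_ring poly set" where
  "residue_polys = {x. degree x < degree f}"

definition base_hyperplane :: "bool mod_ring poly set" where
  "base_hyperplane = {x \<in> residue_polys. coeff x 0 = 0}"

definition mult_mod :: "bool mod_ring poly \<Rightarrow> bool mod_ring poly \<Rightarrow> bool mod_ring poly" where
  "mult_mod d x = d * x mod f"

definition hyperplane :: "bool mod_ring poly \<Rightarrow> bool mod_ring poly set" where
  "hyperplane d = mult_mod d ` base_hyperplane"

lemma f_nonzero: "f \<noteq> 0"
  using two_le_degree by auto

lemma finite_residue_polys: "finite residue_polys"
  and card_residue_polys: "card residue_polys = 2 ^ degree f"
  using card_polys_of_degree_less[of "degree f", where 'a=bool] two_le_degree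
  by (simp_all add: residue_polys_def)

lemma zero_mem_residue_polys: "0 \<in> residue_polys" and one_mem_residue_polys: "1 \<in> residue_polys"
  using two_le_degree by (simp_all add: residue_polys_def)

lemma diff_mem_residue_polys: "x \<in> residue_polys \<Longrightarrow> y \<in> residue_polys \<Longrightarrow> x - y \<in> residue_polys"
  by (simp add: residue_polys_def degree_diff_less)

lemma add_mem_residue_polys: "x \<in> residue_polys \<Longrightarrow> y \<in> residue_polys \<Longrightarrow> x + y \<in> residue_polys"
  by (simp add: residue_polys_def degree_add_less)

lemma mult_mod_mem_residue_polys: "mult_mod d x \<in> residue_polys"
  using degree_mod_less'[OF f_nonzero, of "d * x"] two_le_degree
  by (cases "d * x mod f = 0") (auto simp: residue_polys_def mult_mod_def)

lemma mult_mod_diff: "mult_mod d (x - y) = mult_mod d x - mult_mod d y"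
  by (simp add: mult_mod_def right_diff_distrib poly_mod_diff_left)

lemma mult_mod_diff_left: "mult_mod (d - e) x = mult_mod d x - mult_mod e x"
  by (simp add: mult_mod_def left_diff_distrib poly_mod_diff_left)

lemma mult_mod_one: "d \<in> residue_polys \<Longrightarrow> mult_mod d 1 = d"
  by (simp add: mult_mod_def residue_polys_def mod_poly_less)

text \<open>Multiplication by a nonzero residue is injective because f is prime and no
  nonzero residue is divisible by f.\<close>

lemma inj_on_mult_mod:
  assumes d: "d \<in> residue_polys" "d \<noteq> 0"
  shows "inj_on (mult_mod d) residue_polys"
proof (rule inj_onI)
  have not_dvd: "\<not> f dvd x" if "x \<in> residue_polys" "x \<noteq> 0" for x
    using that dvd_imp_degree_le[of f x] by (auto simp: residue_polys_def)
  fix x y assume xy: "x \<in> residue_polys" "y \<in> residue_polys" "mult_mod d x = mult_mod d y"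
  then have "f dvd d * (x - y)" by (simp add: mult_mod_def mod_eq_dvd_iff right_diff_distrib)
  then have "f dvd x - y"
    using irreducible_imp_prime_elem[OF irreducible_f] not_dvd[OF d]
    by (simp add: prime_elem_dvd_mult_iff)
  then show "x = y" using not_dvd diff_mem_residue_polys[OF xy(1,2)] by fastforce
qed

lemma mult_mod_image:
  assumes "d \<in> residue_polys" "d \<noteq> 0"
  shows "mult_mod d ` residue_polys = residue_polys"
  using finite_residue_polys mult_mod_mem_residue_polys inj_on_mult_mod[OF assms]
  by (intro endo_inj_surj) auto

lemma coeff_0_eq_1: "x \<in> residue_polys - base_hyperplane \<Longrightarrow> coeff x 0 = 1"
  using GF2_cases[of "coeff x 0"] by (auto simp: base_hyperplane_def)

lemma diff_mem_base_hyperplane: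
  "x \<in> residue_polys - base_hyperplane \<Longrightarrow> y \<in> residue_polys - base_hyperplane \<Longrightarrow>
    x - y \<in> base_hyperplane"
  using coeff_0_eq_1[of x] coeff_0_eq_1[of y] diff_mem_residue_polys[of x y]
  by (simp add: base_hyperplane_def)

lemma base_hyperplane_subset: "base_hyperplane \<subseteq> residue_polys"
  by (auto simp: base_hyperplane_def)

lemma finite_base_hyperplane: "finite base_hyperplane"
  using finite_subset[OF base_hyperplane_subset finite_residue_polys] .

lemma card_base_hyperplane: "card base_hyperplane = 2 ^ (degree f - 1)"
proof -
  note V = base_hyperplane_subset
  have "bij_betw (\<lambda>x. x + 1) base_hyperplane (residue_polys - base_hyperplane)"
  proof (rule bij_betwI[where g = "\<lambda>x. x + 1"])
    show "(\<lambda>x. x + 1) \<in> base_hyperplane \<rightarrow> residue_polys - base_hyperplane"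
      using add_mem_residue_polys[OF _ one_mem_residue_polys] by (auto simp: base_hyperplane_def)
    show "(\<lambda>x. x + 1) \<in> residue_polys - base_hyperplane \<rightarrow> base_hyperplane"
    proof
      fix x assume x: "x \<in> residue_polys - base_hyperplane"
      then show "x + 1 \<in> base_hyperplane"
        using coeff_0_eq_1[OF x] add_mem_residue_polys[OF _ one_mem_residue_polys]
        by (simp add: base_hyperplane_def)
    qed
  qed (simp_all add: add.assoc)
  then have "card (residue_polys - base_hyperplane) = card base_hyperplane"
    by (simp add: bij_betw_same_card)
  then have "2 ^ degree f = 2 * card base_hyperplane"
    using card_Diff_subset[OF finite_base_hyperplane V] card_mono[OF finite_residue_polys V]
    by (simp add: card_residue_polys)
  moreover have "(2::nat) ^ degree f = 2 * 2 ^ (degree f - 1)"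
    using two_le_degree by (simp flip: power_Suc)
  ultimately show ?thesis by simp
qed

lemma hyperplane_subset: "hyperplane d \<subseteq> residue_polys"
  using mult_mod_mem_residue_polys by (auto simp: hyperplane_def)

lemma zero_mem_hyperplane: "0 \<in> hyperplane d"
proof -
  have "0 \<in> base_hyperplane" using zero_mem_residue_polys by (simp add: base_hyperplane_def)
  moreover have "mult_mod d 0 = 0" by (simp add: mult_mod_def)
  ultimately show ?thesis unfolding hyperplane_def by (metis image_eqI)
qed

lemma diff_mem_hyperplane:
  assumes "x \<in> hyperplane d" and "y \<in> hyperplane d"
  shows "x - y \<in> hyperplane d"
proof -
  obtain a b where ab: "a \<in> base_hyperplane" "b \<in> base_hyperplane"
    "x = mult_mod d a" "y = mult_mod d b"
    using assms by (auto simp: hyperplane_def)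
  then have "a - b \<in> base_hyperplane"
    using diff_mem_residue_polys by (simp add: base_hyperplane_def)
  moreover have "x - y = mult_mod d (a - b)" by (simp add: ab mult_mod_diff)
  ultimately show ?thesis by (simp add: hyperplane_def)
qed

text \<open>Multiplication by d maps base_hyperplane onto hyperplane d and its complement onto
  the complement, so hyperplane d again has index two.\<close>

lemma diff_mem_hyperplane_if_not_mem:
  assumes d: "d \<in> residue_polys" "d \<noteq> 0"
    and x: "x \<in> residue_polys - hyperplane d" and y: "y \<in> residue_polys - hyperplane d"
  shows "x - y \<in> hyperplane d"
proof -
  obtain a b where "a \<in> residue_polys" "b \<in> residue_polys" "x = mult_mod d a" "y = mult_mod d b"
    using x y mult_mod_image[OF d] by (metis DiffD1 imageE)
  moreover from this have "a \<notin> base_hyperplane" "b \<notin> base_hyperplane"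
    using x y by (auto simp: hyperplane_def)
  ultimately show ?thesis
    using diff_mem_base_hyperplane[of a b] by (simp add: hyperplane_def flip: mult_mod_diff)
qed

lemma not_mem_hyperplane_self:
  assumes d: "d \<in> residue_polys" "d \<noteq> 0"
  shows "d \<notin> hyperplane d"
proof
  assume "d \<in> hyperplane d"
  then obtain a where a: "a \<in> base_hyperplane" "mult_mod d a = mult_mod d 1"
    using mult_mod_one[OF d(1)] by (auto simp: hyperplane_def)
  then have "a = 1"
    using inj_on_mult_mod[OF d] one_mem_residue_polys
    by (auto simp: base_hyperplane_def dest: inj_onD)
  then show False using a(1) by (simp add: base_hyperplane_def)
qed

theorem ex_H_design:
  assumes "0 < s"
  shows "\<exists>S. H_design (2 ^ degree f) (s * 2 ^ (degree f - 1))
    (2 ^ degree f - 1) (2 ^ degree f - 2) S"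
proof -
  obtain point :: "nat \<Rightarrow> bool mod_ring poly"
    where point: "bij_betw point {..<2 ^ degree f} residue_polys"
    using ex_bij_betw_nat_finite[OF finite_residue_polys]
    by (auto simp: card_residue_polys atLeast0LessThan)
  obtain digit :: "nat \<Rightarrow> bool mod_ring poly"
    where digit: "bij_betw digit {..<2 ^ (degree f - 1)} base_hyperplane"
    using ex_bij_betw_nat_finite[OF finite_base_hyperplane]
    by (auto simp: card_base_hyperplane atLeast0LessThan)
  have point_mem: "point i \<in> residue_polys" if "i < 2 ^ degree f" for i
    using point that by (auto simp: bij_betw_def)
  have point_sum: "point i + point j \<in> residue_polys" "point i + point j \<noteq> 0"
    if "i < 2 ^ degree f" "j < 2 ^ degree f" "i \<noteq> j" for i j
  proof -
    show "point i + point j \<in> residue_polys" using that point_mem add_mem_residue_polys by blast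
    have "point i \<noteq> point j" using point that by (auto simp: bij_betw_def dest: inj_onD)
    then show "point i + point j \<noteq> 0" by (simp add: add_eq_0_iff)
  qed
  interpret index_two_system "2 ^ degree f" "2 ^ (degree f - 1)" s residue_polys
    "\<lambda>i j. hyperplane (point i + point j)" "\<lambda>i k a. mult_mod (point i + point k) (digit a)" point
  proof
    show "2 \<le> (2::nat) ^ degree f"
      using power_increasing[of 1 "degree f" "2::nat"] two_le_degree by simp
    show "hyperplane (point i + point j) = hyperplane (point j + point i)" for i j
      by (simp add: add.commute)
    show "x - y \<in> hyperplane (point i + point j)"
      if "i < 2 ^ degree f" "j < 2 ^ degree f" "i \<noteq> j"
        and "x \<in> residue_polys - hyperplane (point i + point j)"
        and "y \<in> residue_polys - hyperplane (point i + point j)"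
      for i j x y
      using diff_mem_hyperplane_if_not_mem[OF point_sum[OF that(1-3)] that(4,5)] .
    show "point i - point j \<notin> hyperplane (point i + point j)"
      if "i < 2 ^ degree f" "j < 2 ^ degree f" "i \<noteq> j" for i j
      using not_mem_hyperplane_self[OF point_sum[OF that]] by (simp add: diff_GF2_poly)
    show "bij_betw (\<lambda>a. mult_mod (point i + point j) (digit a)) {..<2 ^ (degree f - 1)}
        (hyperplane (point i + point j))"
      if "i < 2 ^ degree f" "j < 2 ^ degree f" "i \<noteq> j" for i j
    proof -
      have "inj_on (mult_mod (point i + point j)) base_hyperplane"
        using inj_on_mult_mod[OF point_sum[OF that]] base_hyperplane_subset by (rule inj_on_subset)
      then show ?thesis
        using bij_betw_trans[OF digit inj_on_imp_bij_betw] by (simp add: hyperplane_def comp_def)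
    qed
    show "mult_mod (point i + point k) (digit a) - mult_mod (point j + point k) (digit a)
        \<in> hyperplane (point i + point j)"
      if "a < 2 ^ (degree f - 1)" for i j k a
    proof -
      have "mult_mod (point i + point k) (digit a) - mult_mod (point j + point k) (digit a) =
          mult_mod ((point i + point k) - (point j + point k)) (digit a)"
        by (rule mult_mod_diff_left[symmetric])
      also have "\<dots> = mult_mod (point i + point j) (digit a)"
        using add_diff_cancel_right diff_GF2_poly by metis
      finally show ?thesis using digit that by (auto simp: hyperplane_def bij_betw_def)
    qed
  qed (use assms zero_mem_residue_polys diff_mem_residue_polys zero_mem_hyperplane
      diff_mem_hyperplane hyperplane_subset point_mem in auto)
  show ?thesis using H_design_blocks by blast
qed

end

theorem ex_H_design_power_of_two:
  assumes "2 \<le> m" and "0 < s"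
  shows "\<exists>S. H_design (2 ^ m) (s * 2 ^ (m - 1)) (2 ^ m - 1) (2 ^ m - 2) S"
proof -
  obtain f :: "bool mod_ring poly" where f: "irreducible f" "degree f = m"
    using exists_irreducible_of_degree[of m] assms(1) by auto
  then interpret GF2_extension f using assms(1) by unfold_locales simp_all
  show ?thesis using ex_H_design[OF assms(2)] f(2) by simp
qed

theorem corollary2:
  fixes s t :: nat
  assumes "s \<ge> 1" and "t \<ge> 1"
  shows "\<exists>S. H_design (2 ^ (t + 1)) (s * 2 ^ t) (2 ^ (t + 1) - 1) (2 ^ (t + 1) - 2) S"
  using ex_H_design_power_of_two[of "t + 1" s] assms by simp

end
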